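(* Let $\mathcal{A}$ be a topological ring, let $\mathcal{B}$ be a separated topological ring with separated completion $c\colon\mathcal{B}\to\widehat{\mathcal{B}}$, and let $h_n\colon\mathcal{A}\to\mathcal{B}$, $n\in\mathbb{N}$, be a sequence of group homomorphisms which converges pointwise to the zero homomorphism. Then the map $s\colon\mathcal{A}\to\widehat{\mathcal{B}}\{T\}$, $a\mapsto\sum_{n\in\mathbb{N}}c(h_n(a))T^n$, is a well-defined group homomorphism, and the following are equivalent: (a) $s$ is continuous; (b) every $h_n$ is continuous and the sequence $(h_n)_n$ converges continuously to the zero homomorphism.
   Context: Topological rings are linearly topologized with a countable fundamental system of open ideals; separated means Hausdorff; the separated completion is $\widehat{\mathcal{B}}=\varprojlim_{\mathfrak{b}}\mathcal{B}/\mathfrak{b}$ over open ideals (quotients discrete) with the inverse limit topology and canonical map $c$. For the complete ring $\widehat{\mathcal{B}}$, $\widehat{\mathcal{B}}\{T\}$ is the ring of restricted power series $\sum b_nT^n$ with $b_n\to0$ in $\widehat{\mathcal{B}}$, topologized by the ideals of series with all coefficients in a given open ideal. $(h_n)$ converges pointwise to $0$ if for every $a$ and open ideal $\mathfrak{b}$ there is $n_0$ with $h_n(a)\in\mathfrak{b}$ for $n\ge n_0$; it converges continuously to $0$ if every $h_n$ is continuous and for every $a$ and open ideal $\mathfrak{b}'$ of $\mathcal{B}$ there exist an open ideal $\mathfrak{a}$ of $\mathcal{A}$ and $n_0$ with $h_n(a+x)\in\mathfrak{b}'$ for all $x\in\mathfrak{a}$, $n\ge n_0$. *)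

theory Defs
  imports "HOL-Analysis.Analysis"
begin

definition is_ideal :: "'a::comm_ring_1 set \<Rightarrow> bool" where
  "is_ideal J \<longleftrightarrow> 0 \<in> J \<and> (\<forall>x\<in>J. \<forall>y\<in>J. x + y \<in> J) \<and> (\<forall>x\<in>J. - x \<in> J)
     \<and> (\<forall>r x. x \<in> J \<longrightarrow> r * x \<in> J)"

definition fund_system :: "(nat \<Rightarrow> 'a::comm_ring_1 set) \<Rightarrow> bool" where
  "fund_system I \<longleftrightarrow> (\<forall>k. is_ideal (I k)) \<and> (\<forall>i j. \<exists>k. I k \<subseteq> I i \<inter> I j)"

definition lin_top :: "(nat \<Rightarrow> 'a::comm_ring_1 set) \<Rightarrow> 'a topology" where
  "lin_top I = topology (\<lambda>U. \<forall>x\<in>U. \<exists>k. (\<lambda>y. x + y) ` I k \<subseteq> U)"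

definition open_ideal :: "(nat \<Rightarrow> 'a::comm_ring_1 set) \<Rightarrow> 'a set \<Rightarrow> bool" where
  "open_ideal I J \<longleftrightarrow> is_ideal J \<and> (\<exists>k. I k \<subseteq> J)"

section \<open>Separated completion as inverse limit of discrete quotients B/b over open ideals b\<close>

text \<open>An element is a compatible family of cosets, indexed by the open ideals
  (extended by the empty set at non-open-ideals, for extensionality).\<close>
definition hat_carrier :: "(nat \<Rightarrow> 'b::comm_ring_1 set) \<Rightarrow> ('b set \<Rightarrow> 'b set) set" where
  "hat_carrier I = {\<xi>. (\<forall>b. open_ideal I b \<longrightarrow> (\<exists>x. \<xi> b = (\<lambda>y. x + y) ` b))
     \<and> (\<forall>b. \<not> open_ideal I b \<longrightarrow> \<xi> b = {})
     \<and> (\<forall>b b'. open_ideal I b \<and> open_ideal I b' \<and> b \<subseteq> b' \<longrightarrow> \<xi> b \<subseteq> \<xi> b')}"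

definition cmap :: "(nat \<Rightarrow> 'b::comm_ring_1 set) \<Rightarrow> 'b \<Rightarrow> ('b set \<Rightarrow> 'b set)" where
  "cmap I x = (\<lambda>b. if open_ideal I b then (\<lambda>y. x + y) ` b else {})"

definition hat_op :: "(nat \<Rightarrow> 'b::comm_ring_1 set) \<Rightarrow> ('b \<Rightarrow> 'b \<Rightarrow> 'b)
    \<Rightarrow> ('b set \<Rightarrow> 'b set) \<Rightarrow> ('b set \<Rightarrow> 'b set) \<Rightarrow> ('b set \<Rightarrow> 'b set)" where
  "hat_op I f \<xi> \<eta> = (\<lambda>b. if open_ideal I b
      then {z. \<exists>x\<in>\<xi> b. \<exists>y\<in>\<eta> b. z - f x y \<in> b} else {})"

definition hat_zero :: "(nat \<Rightarrow> 'b::comm_ring_1 set) \<Rightarrow> ('b set \<Rightarrow> 'b set)" where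
  "hat_zero I = cmap I 0"

definition hat_top :: "(nat \<Rightarrow> 'b::comm_ring_1 set) \<Rightarrow> ('b set \<Rightarrow> 'b set) topology" where
  "hat_top I = topology (\<lambda>U. U \<subseteq> hat_carrier I \<and>
     (\<forall>\<xi>\<in>U. \<exists>b. open_ideal I b \<and> {\<eta> \<in> hat_carrier I. \<eta> b = \<xi> b} \<subseteq> U))"

definition hat_ideal :: "(nat \<Rightarrow> 'b::comm_ring_1 set) \<Rightarrow> ('b set \<Rightarrow> 'b set) set \<Rightarrow> bool" where
  "hat_ideal I J \<longleftrightarrow> J \<subseteq> hat_carrier I \<and> hat_zero I \<in> J
     \<and> (\<forall>\<xi>\<in>J. \<forall>\<eta>\<in>J. hat_op I (+) \<xi> \<eta> \<in> J \<and> hat_op I (-) \<xi> \<eta> \<in> J)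
     \<and> (\<forall>\<rho>\<in>hat_carrier I. \<forall>\<xi>\<in>J. hat_op I (*) \<rho> \<xi> \<in> J)"

definition hat_open_ideal :: "(nat \<Rightarrow> 'b::comm_ring_1 set) \<Rightarrow> ('b set \<Rightarrow> 'b set) set \<Rightarrow> bool" where
  "hat_open_ideal I J \<longleftrightarrow> hat_ideal I J \<and> openin (hat_top I) J"

section \<open>Restricted power series over the completion (coefficient sequences)\<close>

definition rps_carrier :: "(nat \<Rightarrow> 'b::comm_ring_1 set) \<Rightarrow> (nat \<Rightarrow> ('b set \<Rightarrow> 'b set)) set" where
  "rps_carrier I = {\<sigma>. (\<forall>n. \<sigma> n \<in> hat_carrier I)
      \<and> limitin (hat_top I) \<sigma> (hat_zero I) sequentially}"

definition rps_top :: "(nat \<Rightarrow> 'b::comm_ring_1 set) \<Rightarrow> (nat \<Rightarrow> ('b set \<Rightarrow> 'b set)) topology" where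
  "rps_top I = topology (\<lambda>U. U \<subseteq> rps_carrier I \<and>
     (\<forall>\<sigma>\<in>U. \<exists>J. hat_open_ideal I J \<and>
        {\<tau> \<in> rps_carrier I. \<forall>n. hat_op I (-) (\<tau> n) (\<sigma> n) \<in> J} \<subseteq> U))"

definition rps_add :: "(nat \<Rightarrow> 'b::comm_ring_1 set) \<Rightarrow> (nat \<Rightarrow> ('b set \<Rightarrow> 'b set))
    \<Rightarrow> (nat \<Rightarrow> ('b set \<Rightarrow> 'b set)) \<Rightarrow> (nat \<Rightarrow> ('b set \<Rightarrow> 'b set))" where
  "rps_add I \<sigma> \<tau> = (\<lambda>n. hat_op I (+) (\<sigma> n) (\<tau> n))"

definition conv_pointwise_zero :: "(nat \<Rightarrow> 'b::comm_ring_1 set) \<Rightarrow> (nat \<Rightarrow> 'a \<Rightarrow> 'b) \<Rightarrow> bool" where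
  "conv_pointwise_zero IB h \<longleftrightarrow>
     (\<forall>a b. open_ideal IB b \<longrightarrow> (\<exists>n0. \<forall>n\<ge>n0. h n a \<in> b))"

definition conv_continuously_zero :: "(nat \<Rightarrow> 'a::comm_ring_1 set) \<Rightarrow> (nat \<Rightarrow> 'b::comm_ring_1 set)
    \<Rightarrow> (nat \<Rightarrow> 'a \<Rightarrow> 'b) \<Rightarrow> bool" where
  "conv_continuously_zero IA IB h \<longleftrightarrow>
     (\<forall>n. continuous_map (lin_top IA) (lin_top IB) (h n)) \<and>
     (\<forall>a b'. open_ideal IB b' \<longrightarrow>
        (\<exists>\<aa> n0. open_ideal IA \<aa> \<and> (\<forall>x\<in>\<aa>. \<forall>n\<ge>n0. h n (a + x) \<in> b')))"

end

theory Submission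
  imports Defs
begin

(* Since the h_n are additive and the open ideals of the completion contain the kernels of
   the projections onto the quotients B/b, continuity of s at every point amounts to uniform
   equicontinuity at 0: for each open ideal b of B there is one open ideal of A that every h_n
   maps into b.  Together with pointwise convergence this yields continuous convergence.
   Conversely, continuous convergence at 0 gives such an ideal for all n beyond some n0, and
   the finitely many remaining h_n are handled by their individual continuity.  That s is well
   defined is just the pointwise convergence c(h_n(a)) \<rightarrow> 0 in the completion. *)

lemma
  assumes "is_ideal J"
  shows ideal_zero: "0 \<in> J"
    and ideal_add: "x \<in> J \<Longrightarrow> y \<in> J \<Longrightarrow> x + y \<in> J"
    and ideal_diff: "x \<in> J \<Longrightarrow> y \<in> J \<Longrightarrow> x - y \<in> J"
    and ideal_mult_left: "x \<in> J \<Longrightarrow> r * x \<in> J"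
    and ideal_mult_right: "x \<in> J \<Longrightarrow> x * r \<in> J"
  using assms unfolding is_ideal_def
  by (auto simp: mult.commute) (metis diff_conv_add_uminus)

lemma mem_coset_iff: "w \<in> (+) x ` J \<longleftrightarrow> w - x \<in> (J :: 'a::ab_group_add set)"
  by (auto simp: image_iff) (metis add_diff_cancel_left' diff_add_cancel add.commute)

lemma coset_self_mem: "is_ideal J \<Longrightarrow> x \<in> (+) x ` J"
  by (simp add: mem_coset_iff ideal_zero)

lemma coset_eq_iff:
  assumes "is_ideal J"
  shows "(+) x ` J = (+) z ` J \<longleftrightarrow> x - z \<in> J"
proof
  assume "(+) x ` J = (+) z ` J"
  then show "x - z \<in> J"
    using coset_self_mem[OF assms, of x] by (simp add: mem_coset_iff)
next
  assume xz: "x - z \<in> J"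
  have "w - x \<in> J \<longleftrightarrow> w - z \<in> J" for w
    using ideal_add[OF assms _ xz, of "w - x"] ideal_diff[OF assms _ xz, of "w - z"] by auto
  then show "(+) x ` J = (+) z ` J"
    unfolding set_eq_iff mem_coset_iff by blast
qed

lemma coset_eq_self_iff: "is_ideal J \<Longrightarrow> (+) x ` J = J \<longleftrightarrow> x \<in> J"
  using coset_eq_iff[of J x 0] by simp

lemma open_ideal_is_ideal: "open_ideal I b \<Longrightarrow> is_ideal b"
  unfolding open_ideal_def by simp

lemma open_ideal_fund: "fund_system I \<Longrightarrow> open_ideal I (I k)"
  unfolding fund_system_def open_ideal_def by auto

lemma open_ideal_UNIV: "open_ideal I UNIV"
  unfolding open_ideal_def is_ideal_def by auto

lemma open_ideal_Int:
  assumes "fund_system I" "open_ideal I b1" "open_ideal I b2"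
  shows "open_ideal I (b1 \<inter> b2)"
proof -
  obtain k1 k2 where "I k1 \<subseteq> b1" "I k2 \<subseteq> b2"
    using assms(2,3) unfolding open_ideal_def by auto
  moreover obtain k where "I k \<subseteq> I k1 \<inter> I k2"
    using assms(1) unfolding fund_system_def by blast
  moreover have "is_ideal (b1 \<inter> b2)"
    using assms(2,3) unfolding open_ideal_def is_ideal_def by auto
  ultimately show ?thesis
    unfolding open_ideal_def by blast
qed

lemma open_ideal_INT:
  assumes "fund_system I" "finite N" "\<And>n. n \<in> N \<Longrightarrow> open_ideal I (b n)"
  shows "open_ideal I (\<Inter>n\<in>N. b n)"
  using assms(2,3)
  by (induction N rule: finite_induct) (auto intro: open_ideal_UNIV open_ideal_Int[OF assms(1)])

lemma istopology_nbhd_base: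
  assumes "\<And>x b1 b2. x \<in> X \<Longrightarrow> B b1 \<Longrightarrow> B b2 \<Longrightarrow> \<exists>b. B b \<and> N x b \<subseteq> N x b1 \<inter> N x b2"
  shows "istopology (\<lambda>U. U \<subseteq> X \<and> (\<forall>x\<in>U. \<exists>b. B b \<and> N x b \<subseteq> U))"
  unfolding istopology_def
proof (rule conjI; intro allI impI)
  fix S T
  assume S: "S \<subseteq> X \<and> (\<forall>x\<in>S. \<exists>b. B b \<and> N x b \<subseteq> S)"
    and T: "T \<subseteq> X \<and> (\<forall>x\<in>T. \<exists>b. B b \<and> N x b \<subseteq> T)"
  have "\<exists>b. B b \<and> N x b \<subseteq> S \<inter> T" if x: "x \<in> S \<inter> T" for x
  proof -
    obtain b1 b2 where "B b1" "N x b1 \<subseteq> S" "B b2" "N x b2 \<subseteq> T"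
      using S T x by blast
    moreover obtain b where "B b" "N x b \<subseteq> N x b1 \<inter> N x b2"
      using assms[of x b1 b2] x S \<open>B b1\<close> \<open>B b2\<close> by blast
    ultimately show ?thesis
      by blast
  qed
  with S show "S \<inter> T \<subseteq> X \<and> (\<forall>x\<in>S \<inter> T. \<exists>b. B b \<and> N x b \<subseteq> S \<inter> T)"
    by blast
next
  fix \<K> assume "\<forall>U\<in>\<K>. U \<subseteq> X \<and> (\<forall>x\<in>U. \<exists>b. B b \<and> N x b \<subseteq> U)"
  then show "\<Union>\<K> \<subseteq> X \<and> (\<forall>x\<in>\<Union>\<K>. \<exists>b. B b \<and> N x b \<subseteq> \<Union>\<K>)"
    by (meson Sup_upper Union_least order_trans UnionE)
qed

lemma openin_topology_nbhd_base:
  assumes "\<And>x b1 b2. x \<in> X \<Longrightarrow> B b1 \<Longrightarrow> B b2 \<Longrightarrow> \<exists>b. B b \<and> N x b \<subseteq> N x b1 \<inter> N x b2"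
  shows "openin (topology (\<lambda>U. U \<subseteq> X \<and> (\<forall>x\<in>U. \<exists>b. B b \<and> N x b \<subseteq> U))) U
    \<longleftrightarrow> U \<subseteq> X \<and> (\<forall>x\<in>U. \<exists>b. B b \<and> N x b \<subseteq> U)"
  using istopology_nbhd_base[OF assms] by simp

lemma topspace_topology_nbhd_base:
  assumes "\<And>x b1 b2. x \<in> X \<Longrightarrow> B b1 \<Longrightarrow> B b2 \<Longrightarrow> \<exists>b. B b \<and> N x b \<subseteq> N x b1 \<inter> N x b2"
    and "B b0" and "\<And>x b. x \<in> X \<Longrightarrow> B b \<Longrightarrow> N x b \<subseteq> X"
  shows "topspace (topology (\<lambda>U. U \<subseteq> X \<and> (\<forall>x\<in>U. \<exists>b. B b \<and> N x b \<subseteq> U))) = X"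
proof -
  have "openin (topology (\<lambda>U. U \<subseteq> X \<and> (\<forall>x\<in>U. \<exists>b. B b \<and> N x b \<subseteq> U))) X"
    using assms(2,3) by (auto simp: openin_topology_nbhd_base[OF assms(1)])
  then show ?thesis
    by (auto simp: topspace_def openin_topology_nbhd_base[OF assms(1)])
qed

(* The trivial conjuncts put lin_top into the shape of the neighbourhood-base lemmas above. *)
lemma lin_top_nbhd_base:
  "lin_top I = topology (\<lambda>U. U \<subseteq> UNIV \<and> (\<forall>x\<in>U. \<exists>k. True \<and> (+) x ` I k \<subseteq> U))"
  unfolding lin_top_def by simp

lemma lin_top_nbhd_Int:
  assumes "fund_system I"
  shows "\<exists>k. (+) x ` I k \<subseteq> (+) x ` I k1 \<inter> (+) x ` I k2"
proof -
  obtain k where "I k \<subseteq> I k1 \<inter> I k2"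
    using assms unfolding fund_system_def by blast
  then show ?thesis
    by (intro exI[of _ k]) auto
qed

lemma openin_lin_top:
  "fund_system I \<Longrightarrow> openin (lin_top I) U \<longleftrightarrow> (\<forall>x\<in>U. \<exists>k. (+) x ` I k \<subseteq> U)"
  unfolding lin_top_nbhd_base
  by (subst openin_topology_nbhd_base) (use lin_top_nbhd_Int in auto)

lemma topspace_lin_top: "fund_system I \<Longrightarrow> topspace (lin_top I) = UNIV"
  unfolding lin_top_nbhd_base
  by (rule topspace_topology_nbhd_base) (use lin_top_nbhd_Int in auto)

lemma openin_lin_top_open_ideal:
  assumes "fund_system I" "open_ideal I b"
  shows "openin (lin_top I) b"
proof -
  obtain k where "I k \<subseteq> b"
    using assms(2) unfolding open_ideal_def by blast
  then have "(+) y ` I k \<subseteq> b" if "y \<in> b" for y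
    using that ideal_add[OF open_ideal_is_ideal[OF assms(2)]] by blast
  then show ?thesis
    unfolding openin_lin_top[OF assms(1)] by blast
qed

lemma continuous_map_lin_top_iff:
  assumes fA: "fund_system IA" and fB: "fund_system IB" and f: "\<And>x y. f (x + y) = f x + f y"
  shows "continuous_map (lin_top IA) (lin_top IB) f
    \<longleftrightarrow> (\<forall>b. open_ideal IB b \<longrightarrow> (\<exists>k. f ` IA k \<subseteq> b))"
proof (intro iffI allI impI)
  fix b
  assume "continuous_map (lin_top IA) (lin_top IB) f" and b: "open_ideal IB b"
  then have "openin (lin_top IA) {x \<in> topspace (lin_top IA). f x \<in> b}"
    using openin_continuous_map_preimage openin_lin_top_open_ideal[OF fB b] by blast
  moreover have "0 \<in> {x \<in> topspace (lin_top IA). f x \<in> b}"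
    using f[of 0 0] ideal_zero[OF open_ideal_is_ideal[OF b]] topspace_lin_top[OF fA] by simp
  ultimately show "\<exists>k. f ` IA k \<subseteq> b"
    unfolding openin_lin_top[OF fA] by fastforce
next
  assume small: "\<forall>b. open_ideal IB b \<longrightarrow> (\<exists>k. f ` IA k \<subseteq> b)"
  have "openin (lin_top IA) {x. f x \<in> U}" if U: "openin (lin_top IB) U" for U
    unfolding openin_lin_top[OF fA]
  proof
    fix a assume "a \<in> {x. f x \<in> U}"
    then obtain k' where k': "(+) (f a) ` IB k' \<subseteq> U"
      using U unfolding openin_lin_top[OF fB] by blast
    obtain k where "f ` IA k \<subseteq> IB k'"
      using small open_ideal_fund[OF fB] by blast
    then have "(+) a ` IA k \<subseteq> {x. f x \<in> U}"
      using k' f by blast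
    then show "\<exists>k. (+) a ` IA k \<subseteq> {x. f x \<in> U}" ..
  qed
  then show "continuous_map (lin_top IA) (lin_top IB) f"
    unfolding continuous_map_def topspace_lin_top[OF fA] topspace_lin_top[OF fB] by simp
qed

lemma hat_carrier_coset: "\<xi> \<in> hat_carrier I \<Longrightarrow> open_ideal I b \<Longrightarrow> \<exists>x. \<xi> b = (+) x ` b"
  unfolding hat_carrier_def by blast

lemma hat_carrier_mono:
  "\<xi> \<in> hat_carrier I \<Longrightarrow> open_ideal I b \<Longrightarrow> open_ideal I b' \<Longrightarrow> b \<subseteq> b' \<Longrightarrow> \<xi> b \<subseteq> \<xi> b'"
  unfolding hat_carrier_def by blast

lemma hat_carrier_coset_of_mem:
  assumes "\<xi> \<in> hat_carrier I" "open_ideal I b" "x \<in> \<xi> b"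
  shows "\<xi> b = (+) x ` b"
proof -
  obtain x0 where x0: "\<xi> b = (+) x0 ` b"
    using hat_carrier_coset[OF assms(1,2)] by blast
  with assms(3) have "x - x0 \<in> b"
    by (simp add: mem_coset_iff)
  then have "(+) x ` b = (+) x0 ` b"
    using coset_eq_iff[OF open_ideal_is_ideal[OF assms(2)]] by blast
  with x0 show ?thesis
    by simp
qed

lemma hat_carrier_eq_mono:
  assumes "\<xi> \<in> hat_carrier I" "\<eta> \<in> hat_carrier I" "open_ideal I b" "open_ideal I b'" "b \<subseteq> b'"
    and "\<xi> b = \<eta> b"
  shows "\<xi> b' = \<eta> b'"
proof -
  obtain x where "\<xi> b = (+) x ` b"
    using hat_carrier_coset[OF assms(1,3)] by blast
  then have "x \<in> \<xi> b" "x \<in> \<eta> b"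
    using coset_self_mem[OF open_ideal_is_ideal[OF assms(3)]] assms(6) by auto
  then have "x \<in> \<xi> b'" "x \<in> \<eta> b'"
    using hat_carrier_mono assms(1-5) by blast+
  then show ?thesis
    using hat_carrier_coset_of_mem assms(1,2,4) by metis
qed

lemma hat_carrier_nbhd_Int:
  assumes "fund_system I" "\<xi> \<in> hat_carrier I" "open_ideal I b1" "open_ideal I b2"
  shows "\<exists>b. open_ideal I b \<and> {\<eta> \<in> hat_carrier I. \<eta> b = \<xi> b}
    \<subseteq> {\<eta> \<in> hat_carrier I. \<eta> b1 = \<xi> b1} \<inter> {\<eta> \<in> hat_carrier I. \<eta> b2 = \<xi> b2}"
proof (intro exI conjI)
  show b: "open_ideal I (b1 \<inter> b2)"
    using open_ideal_Int[OF assms(1,3,4)] .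
  have "\<eta> b1 = \<xi> b1 \<and> \<eta> b2 = \<xi> b2"
    if "\<eta> \<in> hat_carrier I" "\<eta> (b1 \<inter> b2) = \<xi> (b1 \<inter> b2)" for \<eta>
    using hat_carrier_eq_mono[OF that(1) assms(2) b assms(3) Int_lower1 that(2)]
      hat_carrier_eq_mono[OF that(1) assms(2) b assms(4) Int_lower2 that(2)] by blast
  then show "{\<eta> \<in> hat_carrier I. \<eta> (b1 \<inter> b2) = \<xi> (b1 \<inter> b2)}
    \<subseteq> {\<eta> \<in> hat_carrier I. \<eta> b1 = \<xi> b1} \<inter> {\<eta> \<in> hat_carrier I. \<eta> b2 = \<xi> b2}"
    by blast
qed

lemma cmap_in_hat_carrier: "cmap I x \<in> hat_carrier I"
  unfolding hat_carrier_def cmap_def by auto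

lemma cmap_apply: "open_ideal I b \<Longrightarrow> cmap I x b = (+) x ` b"
  unfolding cmap_def by simp

lemma hat_zero_apply: "open_ideal I b \<Longrightarrow> hat_zero I b = b"
  unfolding hat_zero_def cmap_def by simp

lemma openin_hat_top:
  assumes "fund_system I"
  shows "openin (hat_top I) U \<longleftrightarrow> U \<subseteq> hat_carrier I \<and>
    (\<forall>\<xi>\<in>U. \<exists>b. open_ideal I b \<and> {\<eta> \<in> hat_carrier I. \<eta> b = \<xi> b} \<subseteq> U)"
  unfolding hat_top_def using hat_carrier_nbhd_Int[OF assms] by (rule openin_topology_nbhd_base)

lemma topspace_hat_top:
  assumes "fund_system I"
  shows "topspace (hat_top I) = hat_carrier I"
  unfolding hat_top_def using hat_carrier_nbhd_Int[OF assms] open_ideal_UNIV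
  by (rule topspace_topology_nbhd_base) auto

definition ideal_compatible :: "('b::comm_ring_1 \<Rightarrow> 'b \<Rightarrow> 'b) \<Rightarrow> bool" where
  "ideal_compatible f \<longleftrightarrow>
     (\<forall>b x y u v. is_ideal b \<longrightarrow> u \<in> b \<longrightarrow> v \<in> b \<longrightarrow> f (x + u) (y + v) - f x y \<in> b)"

lemma ideal_compatible_plus: "ideal_compatible ((+) :: 'b::comm_ring_1 \<Rightarrow> _)"
  unfolding ideal_compatible_def by (simp add: ideal_add)

lemma ideal_compatible_minus: "ideal_compatible ((-) :: 'b::comm_ring_1 \<Rightarrow> _)"
  unfolding ideal_compatible_def by (simp add: ideal_diff)

lemma ideal_compatible_times: "ideal_compatible ((*) :: 'b::comm_ring_1 \<Rightarrow> _)"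
  unfolding ideal_compatible_def
proof (intro allI impI)
  fix b :: "'b set" and x y u v :: 'b
  assume b: "is_ideal b" and "u \<in> b" "v \<in> b"
  then have "x * v + (u * y + u * v) \<in> b"
    by (simp add: ideal_add ideal_mult_left ideal_mult_right)
  then show "(x + u) * (y + v) - x * y \<in> b"
    by (simp add: algebra_simps)
qed

lemma hat_op_coset:
  assumes f: "ideal_compatible f" and b: "open_ideal I b"
    and \<xi>: "\<xi> b = (+) x ` b" and \<eta>: "\<eta> b = (+) y ` b"
  shows "hat_op I f \<xi> \<eta> b = (+) (f x y) ` b"
proof -
  have i: "is_ideal b"
    using open_ideal_is_ideal[OF b] .
  have "z - f x y \<in> b \<longleftrightarrow> (\<exists>u\<in>b. \<exists>v\<in>b. z - f (x + u) (y + v) \<in> b)" for z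
  proof
    assume "z - f x y \<in> b"
    then show "\<exists>u\<in>b. \<exists>v\<in>b. z - f (x + u) (y + v) \<in> b"
      using ideal_zero[OF i] by force
  next
    assume "\<exists>u\<in>b. \<exists>v\<in>b. z - f (x + u) (y + v) \<in> b"
    then obtain u v where "u \<in> b" "v \<in> b" and z: "z - f (x + u) (y + v) \<in> b"
      by blast
    then have "f (x + u) (y + v) - f x y \<in> b"
      using f i unfolding ideal_compatible_def by blast
    with z have "(z - f (x + u) (y + v)) + (f (x + u) (y + v) - f x y) \<in> b"
      by (rule ideal_add[OF i])
    then show "z - f x y \<in> b"
      by simp
  qed
  then have "{z. \<exists>u\<in>b. \<exists>v\<in>b. z - f (x + u) (y + v) \<in> b} = (+) (f x y) ` b"
    unfolding set_eq_iff mem_coset_iff by blast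
  moreover have "hat_op I f \<xi> \<eta> b = {z. \<exists>u\<in>b. \<exists>v\<in>b. z - f (x + u) (y + v) \<in> b}"
    unfolding hat_op_def using b \<xi> \<eta> by simp
  ultimately show ?thesis
    by simp
qed

lemma hat_op_in_hat_carrier:
  assumes f: "ideal_compatible f" and \<xi>: "\<xi> \<in> hat_carrier I" and \<eta>: "\<eta> \<in> hat_carrier I"
  shows "hat_op I f \<xi> \<eta> \<in> hat_carrier I"
  unfolding hat_carrier_def
proof (intro CollectI conjI allI impI)
  fix b assume b: "open_ideal I b"
  obtain x y where "\<xi> b = (+) x ` b" "\<eta> b = (+) y ` b"
    using hat_carrier_coset[OF \<xi> b] hat_carrier_coset[OF \<eta> b] by blast
  then show "\<exists>z. hat_op I f \<xi> \<eta> b = (+) z ` b"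
    using hat_op_coset[OF f b] by blast
next
  fix b assume "\<not> open_ideal I b"
  then show "hat_op I f \<xi> \<eta> b = {}"
    unfolding hat_op_def by simp
next
  fix b b' assume "open_ideal I b \<and> open_ideal I b' \<and> b \<subseteq> b'"
  then have b: "open_ideal I b" and b': "open_ideal I b'" and sub: "b \<subseteq> b'"
    by auto
  obtain x y where x: "\<xi> b = (+) x ` b" and y: "\<eta> b = (+) y ` b"
    using hat_carrier_coset[OF \<xi> b] hat_carrier_coset[OF \<eta> b] by blast
  have "x \<in> \<xi> b'"
    using hat_carrier_mono[OF \<xi> b b' sub] x coset_self_mem[OF open_ideal_is_ideal[OF b]] by blast
  then have x': "\<xi> b' = (+) x ` b'"
    by (rule hat_carrier_coset_of_mem[OF \<xi> b'])
  have "y \<in> \<eta> b'"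
    using hat_carrier_mono[OF \<eta> b b' sub] y coset_self_mem[OF open_ideal_is_ideal[OF b]] by blast
  then have y': "\<eta> b' = (+) y ` b'"
    by (rule hat_carrier_coset_of_mem[OF \<eta> b'])
  show "hat_op I f \<xi> \<eta> b \<subseteq> hat_op I f \<xi> \<eta> b'"
    unfolding hat_op_coset[where \<xi>=\<xi> and \<eta>=\<eta>, OF f b x y]
      hat_op_coset[where \<xi>=\<xi> and \<eta>=\<eta>, OF f b' x' y'] using sub by (rule image_mono)
qed

lemma cmap_add: "cmap I (x + y) = hat_op I (+) (cmap I x) (cmap I y)"
proof
  fix b
  show "cmap I (x + y) b = hat_op I (+) (cmap I x) (cmap I y) b"
  proof (cases "open_ideal I b")
    case True
    show ?thesis
      unfolding cmap_apply[OF True]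
      by (rule hat_op_coset[where \<xi>="cmap I x" and \<eta>="cmap I y", OF ideal_compatible_plus True
            cmap_apply[OF True] cmap_apply[OF True], symmetric])
  next
    case False
    then show ?thesis
      unfolding hat_op_def cmap_def by simp
  qed
qed

(* The kernel of the projection of the completion onto B/b; these kernels form a base of the
   open ideals of the completion. *)
definition hat_kernel :: "(nat \<Rightarrow> 'b::comm_ring_1 set) \<Rightarrow> 'b set \<Rightarrow> ('b set \<Rightarrow> 'b set) set" where
  "hat_kernel I b = {\<xi> \<in> hat_carrier I. \<xi> b = b}"

lemma hat_op_diff_in_hat_kernel_iff:
  assumes "\<tau> \<in> hat_carrier I" "\<sigma> \<in> hat_carrier I" and b: "open_ideal I b"
  shows "hat_op I (-) \<tau> \<sigma> \<in> hat_kernel I b \<longleftrightarrow> \<tau> b = \<sigma> b"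
proof -
  have i: "is_ideal b"
    using open_ideal_is_ideal[OF b] .
  obtain x y where x: "\<tau> b = (+) x ` b" and y: "\<sigma> b = (+) y ` b"
    using hat_carrier_coset b assms(1,2) by metis
  then have "hat_op I (-) \<tau> \<sigma> b = (+) (x - y) ` b"
    by (rule hat_op_coset[OF ideal_compatible_minus b])
  then show ?thesis
    unfolding hat_kernel_def
    using hat_op_in_hat_carrier[OF ideal_compatible_minus assms(1,2)] x y
    by (simp add: coset_eq_self_iff[OF i] coset_eq_iff[OF i])
qed

lemma hat_open_ideal_hat_kernel:
  assumes f: "fund_system I" and b: "open_ideal I b"
  shows "hat_open_ideal I (hat_kernel I b)"
proof -
  have zero_coset: "\<xi> b = (+) 0 ` b" if "\<xi> \<in> hat_kernel I b" for \<xi>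
    using that unfolding hat_kernel_def by simp
  show ?thesis
    unfolding hat_open_ideal_def hat_ideal_def
  proof (intro conjI ballI)
    show "hat_kernel I b \<subseteq> hat_carrier I"
      unfolding hat_kernel_def by blast
    show "hat_zero I \<in> hat_kernel I b"
      using cmap_in_hat_carrier[of I 0] hat_zero_apply[OF b] unfolding hat_kernel_def hat_zero_def by simp
    fix \<xi> \<eta> assume \<xi>: "\<xi> \<in> hat_kernel I b" and \<eta>: "\<eta> \<in> hat_kernel I b"
    then have carrier: "\<xi> \<in> hat_carrier I" "\<eta> \<in> hat_carrier I"
      unfolding hat_kernel_def by auto
    show "hat_op I (+) \<xi> \<eta> \<in> hat_kernel I b"
      unfolding hat_kernel_def
      using hat_op_in_hat_carrier[OF ideal_compatible_plus carrier]
        hat_op_coset[where \<xi>=\<xi> and \<eta>=\<eta>, OF ideal_compatible_plus b zero_coset[OF \<xi>] zero_coset[OF \<eta>]]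
      by simp
    show "hat_op I (-) \<xi> \<eta> \<in> hat_kernel I b"
      unfolding hat_kernel_def
      using hat_op_in_hat_carrier[OF ideal_compatible_minus carrier]
        hat_op_coset[where \<xi>=\<xi> and \<eta>=\<eta>, OF ideal_compatible_minus b zero_coset[OF \<xi>] zero_coset[OF \<eta>]]
      by simp
  next
    fix \<rho> \<xi> assume \<rho>: "\<rho> \<in> hat_carrier I" and \<xi>: "\<xi> \<in> hat_kernel I b"
    obtain r where r: "\<rho> b = (+) r ` b"
      using hat_carrier_coset[OF \<rho> b] by blast
    have "\<xi> \<in> hat_carrier I"
      using \<xi> unfolding hat_kernel_def by simp
    then show "hat_op I (*) \<rho> \<xi> \<in> hat_kernel I b"
      unfolding hat_kernel_def
      using hat_op_in_hat_carrier[OF ideal_compatible_times \<rho>]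
        hat_op_coset[where \<xi>=\<rho> and \<eta>=\<xi>, OF ideal_compatible_times b r zero_coset[OF \<xi>]]
      by simp
  next
    have "{\<eta> \<in> hat_carrier I. \<eta> b = \<xi> b} \<subseteq> hat_kernel I b" if "\<xi> \<in> hat_kernel I b" for \<xi>
      using that unfolding hat_kernel_def by simp
    then show "openin (hat_top I) (hat_kernel I b)"
      unfolding openin_hat_top[OF f] using b hat_kernel_def by blast
  qed
qed

lemma hat_open_ideal_contains_hat_kernel:
  assumes "fund_system I" "hat_open_ideal I J"
  shows "\<exists>b. open_ideal I b \<and> hat_kernel I b \<subseteq> J"
proof -
  have "hat_zero I \<in> J" "openin (hat_top I) J"
    using assms(2) unfolding hat_open_ideal_def hat_ideal_def by auto
  then obtain b where b: "open_ideal I b" and "{\<eta> \<in> hat_carrier I. \<eta> b = hat_zero I b} \<subseteq> J"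
    unfolding openin_hat_top[OF assms(1)] by blast
  then have "hat_kernel I b \<subseteq> J"
    unfolding hat_kernel_def hat_zero_apply[OF b] by blast
  with b show ?thesis
    by blast
qed

lemma rps_carrier_hat_carrier: "\<sigma> \<in> rps_carrier I \<Longrightarrow> \<sigma> n \<in> hat_carrier I"
  unfolding rps_carrier_def by auto

lemma rps_top_nbhd_base:
  assumes f: "fund_system I"
  shows "rps_top I = topology (\<lambda>U. U \<subseteq> rps_carrier I \<and>
    (\<forall>\<sigma>\<in>U. \<exists>b. open_ideal I b \<and> {\<tau> \<in> rps_carrier I. \<forall>n. \<tau> n b = \<sigma> n b} \<subseteq> U))"
proof -
  have kernel_nbhd: "{\<tau> \<in> rps_carrier I. \<forall>n. hat_op I (-) (\<tau> n) (\<sigma> n) \<in> hat_kernel I b}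
      = {\<tau> \<in> rps_carrier I. \<forall>n. \<tau> n b = \<sigma> n b}"
    if "\<sigma> \<in> rps_carrier I" "open_ideal I b" for \<sigma> b
    using hat_op_diff_in_hat_kernel_iff rps_carrier_hat_carrier that by blast
  have nbhd_iff:
    "(\<exists>J. hat_open_ideal I J \<and> {\<tau> \<in> rps_carrier I. \<forall>n. hat_op I (-) (\<tau> n) (\<sigma> n) \<in> J} \<subseteq> U)
      \<longleftrightarrow> (\<exists>b. open_ideal I b \<and> {\<tau> \<in> rps_carrier I. \<forall>n. \<tau> n b = \<sigma> n b} \<subseteq> U)"
    if \<sigma>: "\<sigma> \<in> rps_carrier I" for \<sigma> U
  proof
    assume "\<exists>J. hat_open_ideal I J \<and> {\<tau> \<in> rps_carrier I. \<forall>n. hat_op I (-) (\<tau> n) (\<sigma> n) \<in> J} \<subseteq> U"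
    then obtain J where J: "hat_open_ideal I J"
      and JU: "{\<tau> \<in> rps_carrier I. \<forall>n. hat_op I (-) (\<tau> n) (\<sigma> n) \<in> J} \<subseteq> U"
      by blast
    obtain b where b: "open_ideal I b" and "hat_kernel I b \<subseteq> J"
      using hat_open_ideal_contains_hat_kernel[OF f J] by blast
    with JU have "{\<tau> \<in> rps_carrier I. \<forall>n. \<tau> n b = \<sigma> n b} \<subseteq> U"
      unfolding kernel_nbhd[OF \<sigma> b, symmetric] by blast
    with b show "\<exists>b. open_ideal I b \<and> {\<tau> \<in> rps_carrier I. \<forall>n. \<tau> n b = \<sigma> n b} \<subseteq> U"
      by blast
  next
    assume "\<exists>b. open_ideal I b \<and> {\<tau> \<in> rps_carrier I. \<forall>n. \<tau> n b = \<sigma> n b} \<subseteq> U"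
    then obtain b where b: "open_ideal I b" and bU: "{\<tau> \<in> rps_carrier I. \<forall>n. \<tau> n b = \<sigma> n b} \<subseteq> U"
      by blast
    have "{\<tau> \<in> rps_carrier I. \<forall>n. hat_op I (-) (\<tau> n) (\<sigma> n) \<in> hat_kernel I b} \<subseteq> U"
      using bU unfolding kernel_nbhd[OF \<sigma> b] .
    with hat_open_ideal_hat_kernel[OF f b]
    show "\<exists>J. hat_open_ideal I J \<and> {\<tau> \<in> rps_carrier I. \<forall>n. hat_op I (-) (\<tau> n) (\<sigma> n) \<in> J} \<subseteq> U"
      by blast
  qed
  show ?thesis
    unfolding rps_top_def
  proof (intro arg_cong[where f = topology] ext conj_cong refl ball_cong)
    show "(\<exists>J. hat_open_ideal I J \<and> {\<tau> \<in> rps_carrier I. \<forall>n. hat_op I (-) (\<tau> n) (\<sigma> n) \<in> J} \<subseteq> U)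
      \<longleftrightarrow> (\<exists>b. open_ideal I b \<and> {\<tau> \<in> rps_carrier I. \<forall>n. \<tau> n b = \<sigma> n b} \<subseteq> U)"
      if "U \<subseteq> rps_carrier I" "\<sigma> \<in> U" for U \<sigma>
      using nbhd_iff that by blast
  qed
qed

lemma rps_carrier_nbhd_Int:
  assumes "fund_system I" "\<sigma> \<in> rps_carrier I" "open_ideal I b1" "open_ideal I b2"
  shows "\<exists>b. open_ideal I b \<and> {\<tau> \<in> rps_carrier I. \<forall>n. \<tau> n b = \<sigma> n b}
    \<subseteq> {\<tau> \<in> rps_carrier I. \<forall>n. \<tau> n b1 = \<sigma> n b1} \<inter> {\<tau> \<in> rps_carrier I. \<forall>n. \<tau> n b2 = \<sigma> n b2}"
proof (intro exI conjI)
  show b: "open_ideal I (b1 \<inter> b2)"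
    using open_ideal_Int[OF assms(1,3,4)] .
  have "\<tau> n b1 = \<sigma> n b1 \<and> \<tau> n b2 = \<sigma> n b2"
    if "\<tau> \<in> rps_carrier I" "\<tau> n (b1 \<inter> b2) = \<sigma> n (b1 \<inter> b2)" for \<tau> n
    using rps_carrier_hat_carrier[OF that(1)] rps_carrier_hat_carrier[OF assms(2)] that(2)
      hat_carrier_eq_mono[OF _ _ b assms(3) Int_lower1] hat_carrier_eq_mono[OF _ _ b assms(4) Int_lower2]
    by blast
  then show "{\<tau> \<in> rps_carrier I. \<forall>n. \<tau> n (b1 \<inter> b2) = \<sigma> n (b1 \<inter> b2)}
    \<subseteq> {\<tau> \<in> rps_carrier I. \<forall>n. \<tau> n b1 = \<sigma> n b1} \<inter> {\<tau> \<in> rps_carrier I. \<forall>n. \<tau> n b2 = \<sigma> n b2}"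
    by blast
qed

lemma openin_rps_top:
  assumes "fund_system I"
  shows "openin (rps_top I) U \<longleftrightarrow> U \<subseteq> rps_carrier I \<and>
    (\<forall>\<sigma>\<in>U. \<exists>b. open_ideal I b \<and> {\<tau> \<in> rps_carrier I. \<forall>n. \<tau> n b = \<sigma> n b} \<subseteq> U)"
  unfolding rps_top_nbhd_base[OF assms] using rps_carrier_nbhd_Int[OF assms]
  by (rule openin_topology_nbhd_base)

lemma topspace_rps_top:
  assumes "fund_system I"
  shows "topspace (rps_top I) = rps_carrier I"
  unfolding rps_top_nbhd_base[OF assms] using rps_carrier_nbhd_Int[OF assms] open_ideal_UNIV
  by (rule topspace_topology_nbhd_base) auto

lemma cmap_sequence_in_rps_carrier:
  assumes f: "fund_system I" and small: "\<And>b. open_ideal I b \<Longrightarrow> \<exists>n0. \<forall>n\<ge>n0. y n \<in> b"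
  shows "(\<lambda>n. cmap I (y n)) \<in> rps_carrier I"
  unfolding rps_carrier_def limitin_def
proof (intro CollectI conjI allI impI)
  show "cmap I (y n) \<in> hat_carrier I" for n
    by (rule cmap_in_hat_carrier)
  show "hat_zero I \<in> topspace (hat_top I)"
    unfolding topspace_hat_top[OF f] hat_zero_def by (rule cmap_in_hat_carrier)
  fix U assume "openin (hat_top I) U \<and> hat_zero I \<in> U"
  then obtain b where b: "open_ideal I b" and U: "{\<eta> \<in> hat_carrier I. \<eta> b = hat_zero I b} \<subseteq> U"
    unfolding openin_hat_top[OF f] by blast
  obtain n0 where n0: "\<forall>n\<ge>n0. y n \<in> b"
    using small[OF b] by blast
  have "cmap I (y n) b = hat_zero I b" if "n \<ge> n0" for n
    unfolding cmap_apply[OF b] hat_zero_apply[OF b] coset_eq_self_iff[OF open_ideal_is_ideal[OF b]]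
    using n0 that by blast
  then have "cmap I (y n) \<in> U" if "n \<ge> n0" for n
    using that U cmap_in_hat_carrier by blast
  then show "\<forall>\<^sub>F n in sequentially. cmap I (y n) \<in> U"
    using eventually_sequentially by blast
qed

lemma cmap_series_in_rps_carrier:
  assumes "fund_system IB" "conv_pointwise_zero IB h"
  shows "(\<lambda>n. cmap IB (h n a)) \<in> rps_carrier IB"
  using assms(2) unfolding conv_pointwise_zero_def
  by (intro cmap_sequence_in_rps_carrier[OF assms(1)]) blast

definition equicontinuous_at_zero :: "(nat \<Rightarrow> 'a::comm_ring_1 set) \<Rightarrow> (nat \<Rightarrow> 'b::comm_ring_1 set)
    \<Rightarrow> (nat \<Rightarrow> 'a \<Rightarrow> 'b) \<Rightarrow> bool" where
  "equicontinuous_at_zero IA IB h \<longleftrightarrow> (\<forall>b. open_ideal IB b \<longrightarrow> (\<exists>k. \<forall>n. h n ` IA k \<subseteq> b))"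

lemma equicontinuous_at_zero_if_continuous_series:
  assumes fA: "fund_system IA" and fB: "fund_system IB"
    and pw: "conv_pointwise_zero IB h" and add: "\<And>n x y. h n (x + y) = h n x + h n y"
    and cont: "continuous_map (lin_top IA) (rps_top IB) (\<lambda>a n. cmap IB (h n a))"
  shows "equicontinuous_at_zero IA IB h"
  unfolding equicontinuous_at_zero_def
proof (intro allI impI)
  fix b assume b: "open_ideal IB b"
  define U where "U = {\<tau> \<in> rps_carrier IB. \<forall>n. \<tau> n b = b}"
  have "openin (rps_top IB) U"
    unfolding openin_rps_top[OF fB] U_def using b by auto
  then have "openin (lin_top IA) {a \<in> topspace (lin_top IA). (\<lambda>n. cmap IB (h n a)) \<in> U}"
    by (rule openin_continuous_map_preimage[OF cont])
  moreover have "(\<lambda>n. cmap IB (h n a)) \<in> rps_carrier IB" for a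
    using cmap_series_in_rps_carrier[OF fB pw] .
  moreover have "h n 0 = 0" for n
    using add[of n 0 0] by simp
  ultimately have "0 \<in> {a \<in> topspace (lin_top IA). (\<lambda>n. cmap IB (h n a)) \<in> U}"
    unfolding U_def topspace_lin_top[OF fA] using cmap_apply[OF b] by simp
  then obtain k where k: "IA k \<subseteq> {a \<in> topspace (lin_top IA). (\<lambda>n. cmap IB (h n a)) \<in> U}"
    using \<open>openin (lin_top IA) _\<close> unfolding openin_lin_top[OF fA] by fastforce
  have "h n x \<in> b" if "x \<in> IA k" for n x
  proof -
    have "(+) (h n x) ` b = b"
      using k that cmap_apply[OF b] unfolding U_def by auto
    then show ?thesis
      using coset_eq_self_iff[OF open_ideal_is_ideal[OF b]] by blast
  qed
  then show "\<exists>k. \<forall>n. h n ` IA k \<subseteq> b"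
    by blast
qed

lemma continuous_series_if_equicontinuous_at_zero:
  assumes fA: "fund_system IA" and fB: "fund_system IB"
    and pw: "conv_pointwise_zero IB h" and add: "\<And>n x y. h n (x + y) = h n x + h n y"
    and eq: "equicontinuous_at_zero IA IB h"
  shows "continuous_map (lin_top IA) (rps_top IB) (\<lambda>a n. cmap IB (h n a))"
proof -
  have carrier: "(\<lambda>n. cmap IB (h n a)) \<in> rps_carrier IB" for a
    using cmap_series_in_rps_carrier[OF fB pw] .
  have "openin (lin_top IA) {a. (\<lambda>n. cmap IB (h n a)) \<in> U}" if U: "openin (rps_top IB) U" for U
    unfolding openin_lin_top[OF fA]
  proof
    fix a assume "a \<in> {a. (\<lambda>n. cmap IB (h n a)) \<in> U}"
    then have "(\<lambda>n. cmap IB (h n a)) \<in> U"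
      by simp
    with U obtain b where b: "open_ideal IB b"
      and nbhd: "{\<tau> \<in> rps_carrier IB. \<forall>n. \<tau> n b = cmap IB (h n a) b} \<subseteq> U"
      unfolding openin_rps_top[OF fB] by (meson bspec)
    obtain k where k: "\<forall>n. h n ` IA k \<subseteq> b"
      using eq b unfolding equicontinuous_at_zero_def by blast
    have "(\<lambda>n. cmap IB (h n (a + x))) \<in> U" if "x \<in> IA k" for x
    proof -
      have "cmap IB (h n (a + x)) b = cmap IB (h n a) b" for n
        unfolding cmap_apply[OF b] add coset_eq_iff[OF open_ideal_is_ideal[OF b]] using k that by auto
      then show ?thesis
        using nbhd carrier[of "a + x"] by blast
    qed
    then have "(+) a ` IA k \<subseteq> {a. (\<lambda>n. cmap IB (h n a)) \<in> U}"
      by blast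
    then show "\<exists>k. (+) a ` IA k \<subseteq> {a. (\<lambda>n. cmap IB (h n a)) \<in> U}" ..
  qed
  then show ?thesis
    unfolding continuous_map_def topspace_lin_top[OF fA] topspace_rps_top[OF fB]
    using carrier by simp
qed

lemma conv_continuously_zero_if_equicontinuous_at_zero:
  assumes fA: "fund_system IA" and fB: "fund_system IB"
    and pw: "conv_pointwise_zero IB h" and add: "\<And>n x y. h n (x + y) = h n x + h n y"
    and eq: "equicontinuous_at_zero IA IB h"
  shows "conv_continuously_zero IA IB h"
  unfolding conv_continuously_zero_def
proof (intro conjI allI impI)
  fix n
  have "\<exists>k. h n ` IA k \<subseteq> b" if "open_ideal IB b" for b
    using eq that unfolding equicontinuous_at_zero_def by metis
  then show "continuous_map (lin_top IA) (lin_top IB) (h n)"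
    unfolding continuous_map_lin_top_iff[OF fA fB add] by blast
next
  fix a b' assume b': "open_ideal IB b'"
  obtain k where k: "\<forall>n. h n ` IA k \<subseteq> b'"
    using eq b' unfolding equicontinuous_at_zero_def by blast
  obtain n0 where n0: "\<forall>n\<ge>n0. h n a \<in> b'"
    using pw b' unfolding conv_pointwise_zero_def by blast
  have "h n (a + x) \<in> b'" if "x \<in> IA k" "n \<ge> n0" for x n
  proof -
    have "h n a \<in> b'" "h n x \<in> b'"
      using k n0 that by auto
    then show ?thesis
      unfolding add by (rule ideal_add[OF open_ideal_is_ideal[OF b']])
  qed
  then show "\<exists>\<aa> n0. open_ideal IA \<aa> \<and> (\<forall>x\<in>\<aa>. \<forall>n\<ge>n0. h n (a + x) \<in> b')"
    using open_ideal_fund[OF fA, of k] by blast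
qed

lemma equicontinuous_at_zero_if_conv_continuously_zero:
  assumes fA: "fund_system IA" and fB: "fund_system IB"
    and cc: "conv_continuously_zero IA IB h" and add: "\<And>n x y. h n (x + y) = h n x + h n y"
  shows "equicontinuous_at_zero IA IB h"
  unfolding equicontinuous_at_zero_def
proof (intro allI impI)
  fix b assume b: "open_ideal IB b"
  obtain \<aa> n0 where \<aa>: "open_ideal IA \<aa>" and tail: "\<forall>x\<in>\<aa>. \<forall>n\<ge>n0. h n (0 + x) \<in> b"
    using cc b unfolding conv_continuously_zero_def by meson
  have "\<exists>k. h n ` IA k \<subseteq> b" for n
  proof -
    have "continuous_map (lin_top IA) (lin_top IB) (h n)"
      using cc unfolding conv_continuously_zero_def by blast
    with b show ?thesis
      unfolding continuous_map_lin_top_iff[OF fA fB add] by simp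
  qed
  then obtain kn where kn: "\<And>n. h n ` IA (kn n) \<subseteq> b"
    by metis
  have "open_ideal IA (\<Inter>n<n0. IA (kn n))"
    by (rule open_ideal_INT[OF fA]) (simp_all add: open_ideal_fund[OF fA])
  then obtain k where k: "IA k \<subseteq> \<aa> \<inter> (\<Inter>n<n0. IA (kn n))"
    using open_ideal_Int[OF fA \<aa>] unfolding open_ideal_def by blast
  have "h n x \<in> b" if "x \<in> IA k" for n x
  proof (cases "n < n0")
    case True
    with k that have "x \<in> IA (kn n)"
      by blast
    then show ?thesis
      using kn by blast
  next
    case False
    with k that tail show ?thesis
      by auto
  qed
  then show "\<exists>k. \<forall>n. h n ` IA k \<subseteq> b"
    by (intro exI[of _ k] allI image_subsetI)
qed

theorem lemma1p30:
  fixes IA :: "nat \<Rightarrow> 'a::comm_ring_1 set"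
    and IB :: "nat \<Rightarrow> 'b::comm_ring_1 set"
    and h :: "nat \<Rightarrow> 'a \<Rightarrow> 'b"
  assumes "fund_system IA"
    and "fund_system IB"
    and "Hausdorff_space (lin_top IB)"
    and "\<forall>n x y. h n (x + y) = h n x + h n y"
    and "conv_pointwise_zero IB h"
  shows "(\<forall>a. (\<lambda>n. cmap IB (h n a)) \<in> rps_carrier IB)
    \<and> (\<forall>a a'. (\<lambda>n. cmap IB (h n (a + a')))
              = rps_add IB (\<lambda>n. cmap IB (h n a)) (\<lambda>n. cmap IB (h n a')))
    \<and> (continuous_map (lin_top IA) (rps_top IB) (\<lambda>a n. cmap IB (h n a))
        \<longleftrightarrow> conv_continuously_zero IA IB h)"
proof (intro conjI allI)
  note fA = assms(1) and fB = assms(2) and pw = assms(5)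
  have add: "\<And>n x y. h n (x + y) = h n x + h n y"
    using assms(4) by blast
  show "(\<lambda>n. cmap IB (h n a)) \<in> rps_carrier IB" for a
    using cmap_series_in_rps_carrier[OF fB pw] .
  show "(\<lambda>n. cmap IB (h n (a + a'))) = rps_add IB (\<lambda>n. cmap IB (h n a)) (\<lambda>n. cmap IB (h n a'))"
    for a a'
    unfolding rps_add_def add cmap_add ..
  have "continuous_map (lin_top IA) (rps_top IB) (\<lambda>a n. cmap IB (h n a))
      \<longleftrightarrow> equicontinuous_at_zero IA IB h"
    using equicontinuous_at_zero_if_continuous_series[OF fA fB pw add]
      continuous_series_if_equicontinuous_at_zero[OF fA fB pw add] by blast
  also have "\<dots> \<longleftrightarrow> conv_continuously_zero IA IB h"
  proof
    show "conv_continuously_zero IA IB h" if "equicontinuous_at_zero IA IB h"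
      using conv_continuously_zero_if_equicontinuous_at_zero[OF fA fB pw add that] .
    show "equicontinuous_at_zero IA IB h" if "conv_continuously_zero IA IB h"
      using equicontinuous_at_zero_if_conv_continuously_zero[OF fA fB that add] .
  qed
  finally show "continuous_map (lin_top IA) (rps_top IB) (\<lambda>a n. cmap IB (h n a))
      \<longleftrightarrow> conv_continuously_zero IA IB h" .
qed

end
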